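(* Let $A,C$ be integers with $AC\neq0$ and let $f(X)=AX+\frac{C}{X}$. Suppose there exists a nonzero rational number $T$ such that the elliptic curve \[E_2:\ Y^2=(X-2ACT^2)(X+2ACT^2)\bigl(X-2AC(2A^2T^4+(4AC-1)T^2+2C^2)\bigr)\] has positive rank over $\mathbb{Q}$. Then the equation $f(x)f(y)=f(z)$ has infinitely many nontrivial rational solutions $(x,y,z)$.
   Context: A solution $(x,y,z)$ (with $x,y,z$ nonzero, so that $f$ is defined) of $f(x)f(y)=f(z)$ is called nontrivial if $x\neq z$, $y\neq z$ and $f(z)\neq 0$. *)

theory Defs
  imports Main "HOL.Rat"
begin

text \<open>Rational points of the Weierstrass curve  y^2 = x^3 + a x^2 + b x + c  over Q.
  None is the point at infinity O; Some (x,y) an affine point.\<close>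

type_synonym ec_point = "(rat \<times> rat) option"

definition on_curve :: "rat \<Rightarrow> rat \<Rightarrow> rat \<Rightarrow> ec_point \<Rightarrow> bool" where
  "on_curve a b c P = (case P of None \<Rightarrow> True
     | Some (x, y) \<Rightarrow> y^2 = x^3 + a * x^2 + b * x + c)"

definition ec_add :: "rat \<Rightarrow> rat \<Rightarrow> rat \<Rightarrow> ec_point \<Rightarrow> ec_point \<Rightarrow> ec_point" where
  "ec_add a b c P Q = (case P of None \<Rightarrow> Q | Some (x1, y1) \<Rightarrow>
     (case Q of None \<Rightarrow> P | Some (x2, y2) \<Rightarrow>
       (if x1 = x2 \<and> y1 = - y2 then None
        else (let l = (if x1 = x2 then (3 * x1^2 + 2 * a * x1 + b) / (2 * y1)
                       else (y2 - y1) / (x2 - x1));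
                  x3 = l^2 - a - x1 - x2
              in Some (x3, - (y1 + l * (x3 - x1)))))))"

fun ec_smul :: "rat \<Rightarrow> rat \<Rightarrow> rat \<Rightarrow> nat \<Rightarrow> ec_point \<Rightarrow> ec_point" where
  "ec_smul a b c 0 P = None"
| "ec_smul a b c (Suc n) P = ec_add a b c P (ec_smul a b c n P)"

text \<open>The Mordell-Weil group E(Q) has positive rank iff it contains a point of infinite order.\<close>
definition positive_rank :: "rat \<Rightarrow> rat \<Rightarrow> rat \<Rightarrow> bool" where
  "positive_rank a b c = (\<exists>P. on_curve a b c P \<and> (\<forall>n>0. ec_smul a b c n P \<noteq> None))"

definition roots_curve_positive_rank :: "rat \<Rightarrow> rat \<Rightarrow> rat \<Rightarrow> bool" where
  "roots_curve_positive_rank e1 e2 e3 =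
     positive_rank (- (e1 + e2 + e3)) (e1 * e2 + e1 * e3 + e2 * e3) (- (e1 * e2 * e3))"

end

theory Submission
  imports Defs "HOL-Computational_Algebra.Polynomial"
begin

text \<open>Fix y = T and put F = f(T), D = 4AC. Writing x = 2C/s gives f(x) = (s^2 + D)/(2s), and
  f(x) F = f(z) becomes the quadratic A z^2 - F f(x) z + C = 0 in z. It has a rational root exactly
  when its discriminant is a square, i.e. when (s, r) lies on the quartic
  r^2 = F^2 s^4 + 2D(F^2 - 2) s^2 + F^2 D^2, which is birational to E_2 via s = Y / (F T (X - 2ACT^2)).
  A point of infinite order on E_2 has pairwise distinct multiples, because chord-tangent addition
  is cancellative on a nonsingular curve; so E_2 has infinitely many rational points, they give
  pairwise distinct solutions (x, T, z), and only finitely many of those are trivial.\<close>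

section \<open>Chord-tangent addition on Weierstrass curves\<close>

definition ec_cubic :: "rat \<Rightarrow> rat \<Rightarrow> rat \<Rightarrow> rat \<Rightarrow> rat" where
  "ec_cubic a b c x = x^3 + a * x^2 + b * x + c"

definition ec_nonsingular :: "rat \<Rightarrow> rat \<Rightarrow> rat \<Rightarrow> bool" where
  "ec_nonsingular a b c \<longleftrightarrow> (\<forall>x. ec_cubic a b c x = 0 \<longrightarrow> 3 * x^2 + 2 * a * x + b \<noteq> 0)"

definition ec_slope :: "rat \<Rightarrow> rat \<Rightarrow> rat \<Rightarrow> rat \<Rightarrow> rat \<Rightarrow> rat \<Rightarrow> rat" where
  "ec_slope a b x1 y1 x2 y2 =
     (if x1 = x2 then (3 * x1^2 + 2 * a * x1 + b) / (2 * y1) else (y2 - y1) / (x2 - x1))"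

lemma on_curve_None [simp]: "on_curve a b c None"
  by (simp add: on_curve_def)

lemma on_curve_Some: "on_curve a b c (Some (x, y)) \<longleftrightarrow> y^2 = ec_cubic a b c x"
  by (simp add: on_curve_def ec_cubic_def)

lemma ec_add_None_left [simp]: "ec_add a b c None Q = Q"
  by (simp add: ec_add_def)

lemma ec_add_None_right [simp]: "ec_add a b c P None = P"
  by (cases P) (auto simp: ec_add_def)

lemma ec_add_Some_Some:
  "ec_add a b c (Some (x1, y1)) (Some (x2, y2)) =
     (if x1 = x2 \<and> y1 = - y2 then None
      else Some (ec_slope a b x1 y1 x2 y2 ^ 2 - a - x1 - x2,
                 - (y1 + ec_slope a b x1 y1 x2 y2 * (ec_slope a b x1 y1 x2 y2 ^ 2 - a - x1 - x2 - x1))))"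
  by (simp add: ec_add_def ec_slope_def Let_def)

text \<open>The cubic minus the squared line differs from the product of the three linear factors by a
  linear polynomial. It vanishes at x1 and x2, and for a tangent its leading coefficient vanishes
  by the choice of l; hence it is identically zero.\<close>
lemma ec_chord:
  assumes P1: "y1^2 = ec_cubic a b c x1" and P2: "y2^2 = ec_cubic a b c x2"
    and not_opposite: "\<not> (x1 = x2 \<and> y1 = - y2)" and l: "l = ec_slope a b x1 y1 x2 y2"
  defines "x3 \<equiv> l^2 - a - x1 - x2"
  shows "y2 = y1 + l * (x2 - x1)"
    and "ec_cubic a b c x - (y1 + l * (x - x1))^2 = (x - x1) * (x - x2) * (x - x3)"
    and "x3 = x1 \<Longrightarrow> 2 * l * y1 = 3 * x1^2 + 2 * a * x1 + b"
proof -
  define \<alpha> where "\<alpha> = b - 2*l*y1 + 2*l^2*x1 - (x1*x2 + x1*x3 + x2*x3)"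
  define \<beta> where "\<beta> = c - (y1 - l*x1)^2 + x1*x2*x3"
  have rem: "ec_cubic a b c x - (y1 + l*(x - x1))^2 - (x - x1)*(x - x2)*(x - x3) = \<alpha> * x + \<beta>" for x
    unfolding ec_cubic_def \<alpha>_def \<beta>_def x3_def
    by (simp add: power2_eq_square power3_eq_cube algebra_simps)
  have "y2 = y1 + l * (x2 - x1) \<and> \<alpha> = 0"
  proof (cases "x1 = x2")
    case True
    have "(y2 - y1) * (y2 + y1) = 0"
      using P1 P2 True by (simp add: power2_eq_square algebra_simps)
    moreover have "y2 + y1 \<noteq> 0" using not_opposite True by (auto simp: algebra_simps)
    ultimately have "y2 = y1" by simp
    moreover have "2 * l * y1 = 3 * x1^2 + 2 * a * x1 + b"
      using l True not_opposite \<open>y2 = y1\<close> by (auto simp: ec_slope_def)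
    ultimately show ?thesis
      using True unfolding \<alpha>_def x3_def by (simp add: power2_eq_square algebra_simps)
  next
    case False
    have line: "y2 = y1 + l * (x2 - x1)" using l False by (simp add: ec_slope_def)
    have "\<alpha> * x1 + \<beta> = 0" using rem[of x1] P1 by simp
    moreover have "\<alpha> * x2 + \<beta> = 0" using rem[of x2] P2 line by simp
    ultimately have "\<alpha> * (x2 - x1) = 0" unfolding right_diff_distrib by linarith
    with False line show ?thesis by simp
  qed
  then have line: "y2 = y1 + l * (x2 - x1)" and \<alpha>0: "\<alpha> = 0" by simp_all
  have \<beta>0: "\<beta> = 0" using rem[of x1] P1 \<alpha>0 by simp
  show "y2 = y1 + l * (x2 - x1)" by (fact line)
  show "ec_cubic a b c x - (y1 + l * (x - x1))^2 = (x - x1) * (x - x2) * (x - x3)"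
    using rem[of x] \<alpha>0 \<beta>0 by simp
  assume "x3 = x1"
  hence "x2 = l^2 - a - 2 * x1" unfolding x3_def by simp
  with \<alpha>0 \<open>x3 = x1\<close> show "2 * l * y1 = 3 * x1^2 + 2 * a * x1 + b"
    unfolding \<alpha>_def by (simp add: power2_eq_square algebra_simps)
qed

lemma on_curve_ec_add:
  assumes "on_curve a b c P" "on_curve a b c Q"
  shows "on_curve a b c (ec_add a b c P Q)"
proof (cases "P = None \<or> Q = None")
  case True
  with assms show ?thesis by auto
next
  case False
  then obtain x1 y1 x2 y2 where P: "P = Some (x1, y1)" and Q: "Q = Some (x2, y2)" by auto
  show ?thesis
  proof (cases "x1 = x2 \<and> y1 = - y2")
    case True
    with P Q show ?thesis by (simp add: ec_add_Some_Some)
  next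
    case False
    define l where "l = ec_slope a b x1 y1 x2 y2"
    define x3 where "x3 = l^2 - a - x1 - x2"
    have "ec_cubic a b c x3 - (y1 + l * (x3 - x1))^2 = 0"
      using ec_chord(2)[of y1 a b c x1 y2 x2 l x3] assms P Q False
      by (simp add: on_curve_Some l_def x3_def)
    hence "(- (y1 + l * (x3 - x1)))^2 = ec_cubic a b c x3" by (simp only: power2_minus)
    with P Q False show ?thesis
      by (simp add: ec_add_Some_Some on_curve_Some l_def [symmetric] x3_def [symmetric])
  qed
qed

lemma on_curve_ec_smul: "on_curve a b c P \<Longrightarrow> on_curve a b c (ec_smul a b c n P)"
  by (induction n) (simp_all add: on_curve_ec_add)

lemma ec_add_Some_Some_eq_Some:
  "ec_add a b c (Some (x1, y1)) (Some (x2, y2)) = Some (x3, y3) \<longleftrightarrow>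
     \<not> (x1 = x2 \<and> y1 = - y2) \<and> x3 = ec_slope a b x1 y1 x2 y2 ^ 2 - a - x1 - x2 \<and>
     y3 = - (y1 + ec_slope a b x1 y1 x2 y2 * (x3 - x1))"
  by (auto simp: ec_add_Some_Some)

lemma ec_add_Some_neq_self:
  assumes "ec_nonsingular a b c" "on_curve a b c P" "y2^2 = ec_cubic a b c x2"
  shows "ec_add a b c P (Some (x2, y2)) \<noteq> P"
proof
  assume eq: "ec_add a b c P (Some (x2, y2)) = P"
  then obtain x1 y1 where P: "P = Some (x1, y1)" by (cases P) auto
  define l where "l = ec_slope a b x1 y1 x2 y2"
  from eq P have "ec_add a b c (Some (x1, y1)) (Some (x2, y2)) = Some (x1, y1)" by simp
  hence "\<not> (x1 = x2 \<and> y1 = - y2) \<and> x1 = l^2 - a - x1 - x2 \<and> y1 = - (y1 + l * (x1 - x1))"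
    unfolding ec_add_Some_Some_eq_Some l_def .
  then have not_opposite: "\<not> (x1 = x2 \<and> y1 = - y2)" and x3: "l^2 - a - x1 - x2 = x1"
    and "y1 = 0"
    by auto
  have P1: "y1^2 = ec_cubic a b c x1" using assms(2) P by (simp add: on_curve_Some)
  have "2 * l * y1 = 3 * x1^2 + 2 * a * x1 + b"
    using ec_chord(3)[OF P1 assms(3) not_opposite l_def] x3 by simp
  with P1 \<open>y1 = 0\<close> assms(1) show False by (simp add: ec_nonsingular_def)
qed

lemma ec_add_left_cancel_Some:
  assumes ns: "ec_nonsingular a b c" and P1: "y1^2 = ec_cubic a b c x1"
    and Q: "y2^2 = ec_cubic a b c x2" and R: "y2'^2 = ec_cubic a b c x2'"
    and PQ: "ec_add a b c (Some (x1, y1)) (Some (x2, y2)) = Some (x3, y3)"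
    and PR: "ec_add a b c (Some (x1, y1)) (Some (x2', y2')) = Some (x3, y3)"
  shows "x2 = x2' \<and> y2 = y2'"
proof -
  define l where "l = ec_slope a b x1 y1 x2 y2"
  define l' where "l' = ec_slope a b x1 y1 x2' y2'"
  from PQ have nQ: "\<not> (x1 = x2 \<and> y1 = - y2)" and x3: "x3 = l^2 - a - x1 - x2"
    and y3: "y3 = - (y1 + l * (x3 - x1))"
    by (simp_all add: ec_add_Some_Some_eq_Some l_def)
  from PR have nR: "\<not> (x1 = x2' \<and> y1 = - y2')" and x3': "x3 = l'^2 - a - x1 - x2'"
    and y3': "y3 = - (y1 + l' * (x3 - x1))"
    by (simp_all add: ec_add_Some_Some_eq_Some l'_def)
  have "l = l'"
  proof (cases "x3 = x1")
    case True
    have "2 * l * y1 = 3 * x1^2 + 2 * a * x1 + b" "2 * l' * y1 = 3 * x1^2 + 2 * a * x1 + b"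
      using ec_chord(3)[OF P1 Q nQ l_def] ec_chord(3)[OF P1 R nR l'_def] x3 x3' True by simp_all
    hence "(l - l') * (2 * y1) = 0" by (simp add: algebra_simps)
    moreover from P1 ns \<open>2 * l * y1 = _\<close> have "y1 \<noteq> 0" by (auto simp: ec_nonsingular_def)
    ultimately show ?thesis by simp
  next
    case False
    from y3 y3' False show ?thesis by auto
  qed
  with x3 x3' have "x2 = x2'" by simp
  with ec_chord(1)[OF P1 Q nQ l_def] ec_chord(1)[OF P1 R nR l'_def] \<open>l = l'\<close>
  show ?thesis by simp
qed

lemma ec_add_left_cancel:
  assumes ns: "ec_nonsingular a b c"
    and P: "on_curve a b c P" and Q: "on_curve a b c Q" and R: "on_curve a b c R"
    and eq: "ec_add a b c P Q = ec_add a b c P R"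
  shows "Q = R"
proof (cases P)
  case None
  with eq show ?thesis by simp
next
  case (Some p)
  then obtain x1 y1 where P1: "P = Some (x1, y1)" by (cases p) auto
  show ?thesis
  proof (cases Q; cases R)
    fix r assume "Q = None" and r: "R = Some r"
    obtain x y where "R = Some (x, y)" using r by fastforce
    with eq \<open>Q = None\<close> have "ec_add a b c P (Some (x, y)) = P" by simp
    with ec_add_Some_neq_self[OF ns P] R \<open>R = Some (x, y)\<close> show ?thesis
      by (simp add: on_curve_Some)
  next
    fix q assume q: "Q = Some q" and "R = None"
    obtain x y where "Q = Some (x, y)" using q by fastforce
    with eq \<open>R = None\<close> have "ec_add a b c P (Some (x, y)) = P" by simp
    with ec_add_Some_neq_self[OF ns P] Q \<open>Q = Some (x, y)\<close> show ?thesis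
      by (simp add: on_curve_Some)
  next
    fix q r assume q: "Q = Some q" and r: "R = Some r"
    obtain x2 y2 x2' y2' where q: "Q = Some (x2, y2)" and r: "R = Some (x2', y2')"
      using q r by fastforce
    show ?thesis
    proof (cases "ec_add a b c P Q")
      case None
      with eq P1 q r show ?thesis by (simp add: ec_add_Some_Some split: if_splits)
    next
      case (Some s)
      then obtain x3 y3 where "ec_add a b c P Q = Some (x3, y3)" by (cases s) auto
      with eq P1 q r ec_add_left_cancel_Some[OF ns, of y1 x1 y2 x2 y2' x2' x3 y3] P Q R
      show ?thesis by (simp add: on_curve_Some)
    qed
  qed simp
qed

lemma inj_ec_smul:
  assumes "ec_nonsingular a b c" "on_curve a b c P"
    and nontorsion: "\<forall>n>0. ec_smul a b c n P \<noteq> None"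
  shows "inj (\<lambda>n. ec_smul a b c n P)"
proof (rule injI)
  show "m = n" if "ec_smul a b c m P = ec_smul a b c n P" for m n
  using that proof (induction m arbitrary: n)
    case 0
    with nontorsion show ?case by (metis ec_smul.simps(1) neq0_conv)
  next
    case (Suc m)
    then obtain n' where n: "n = Suc n'"
      using nontorsion by (metis ec_smul.simps(1) not0_implies_Suc zero_less_Suc)
    with Suc.prems have "ec_smul a b c m P = ec_smul a b c n' P"
      using ec_add_left_cancel[OF assms(1,2) on_curve_ec_smul on_curve_ec_smul] assms(2) by simp
    with Suc.IH n show ?case by simp
  qed
qed

lemma positive_rank_infinite_points:
  assumes "ec_nonsingular a b c" "positive_rank a b c"
  shows "infinite {(x, y). y^2 = ec_cubic a b c x}"
proof
  assume fin: "finite {(x, y). y^2 = ec_cubic a b c x}"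
  obtain P where P: "on_curve a b c P" and "\<forall>n>0. ec_smul a b c n P \<noteq> None"
    using assms(2) unfolding positive_rank_def by blast
  with assms(1) have "infinite (range (\<lambda>n. ec_smul a b c n P))"
    using inj_ec_smul finite_imageD infinite_UNIV_nat by blast
  moreover have "range (\<lambda>n. ec_smul a b c n P) \<subseteq> insert None (Some ` {(x, y). y^2 = ec_cubic a b c x})"
  proof
    fix Q assume "Q \<in> range (\<lambda>n. ec_smul a b c n P)"
    with on_curve_ec_smul[OF P] have "on_curve a b c Q" by auto
    thus "Q \<in> insert None (Some ` {(x, y). y^2 = ec_cubic a b c x})"
      by (cases Q) (auto simp: on_curve_Some)
  qed
  ultimately show False using fin finite_subset by blast
qed

lemma roots_curve_infinite_points:
  assumes "e1 \<noteq> e2" "e1 \<noteq> e3" "e2 \<noteq> e3" "roots_curve_positive_rank e1 e2 e3"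
  shows "infinite {(X, Y). Y \<noteq> 0 \<and> Y^2 = (X - e1) * (X - e2) * (X - e3)}"
proof -
  define a where "a = - (e1 + e2 + e3)"
  define b where "b = e1 * e2 + e1 * e3 + e2 * e3"
  define c where "c = - (e1 * e2 * e3)"
  have cubic: "ec_cubic a b c x = (x - e1) * (x - e2) * (x - e3)" for x
    unfolding ec_cubic_def a_def b_def c_def by (simp add: power2_eq_square power3_eq_cube algebra_simps)
  have "3 * x^2 + 2 * a * x + b = (x - e1) * (x - e2) + (x - e1) * (x - e3) + (x - e2) * (x - e3)" for x
    unfolding a_def b_def by (simp add: power2_eq_square algebra_simps)
  with assms(1-3) have "ec_nonsingular a b c"
    unfolding ec_nonsingular_def cubic by auto
  moreover have "positive_rank a b c"
    using assms(4) unfolding roots_curve_positive_rank_def a_def b_def c_def by simp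
  ultimately have "infinite {(x, y). y^2 = ec_cubic a b c x}"
    by (rule positive_rank_infinite_points)
  hence "infinite {(X, Y). Y^2 = (X - e1) * (X - e2) * (X - e3)}" by (simp add: cubic)
  moreover have "{(X, Y). Y^2 = (X - e1) * (X - e2) * (X - e3)}
      \<subseteq> {(X, Y). Y \<noteq> 0 \<and> Y^2 = (X - e1) * (X - e2) * (X - e3)} \<union> {(e1, 0), (e2, 0), (e3, 0)}"
    by auto
  ultimately show ?thesis using finite_subset by auto
qed

section \<open>The quartic model of the curve E_2\<close>

text \<open>With f x = a x + c / x and x = 2c / s, r / (2s) is a square root of the discriminant
  F^2 f(x)^2 - 4ac of the quadratic a z^2 - F f(x) z + c.\<close>
definition on_quartic :: "'a::field_char_0 \<Rightarrow> 'a \<Rightarrow> 'a \<Rightarrow> 'a \<times> 'a \<Rightarrow> bool" where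
  "on_quartic a c F = (\<lambda>(s, r). r^2 = F^2 * s^4 + 8*a*c * (F^2 - 2) * s^2 + 16 * F^2 * (a*c)^2)"

definition solution_of_quartic_point :: "'a::field_char_0 \<Rightarrow> 'a \<Rightarrow> 'a \<Rightarrow> 'a \<times> 'a \<Rightarrow> 'a \<times> 'a" where
  "solution_of_quartic_point a c F = (\<lambda>(s, r). (2*c / s, (F * (s^2 + 4*a*c) + r) / (4*a*s)))"

text \<open>Its inverse is X = T^2 (4ac (F^2 - 1) - F (r - F s^2)) / 2, Y = s F T (X - 2acT^2).\<close>
definition quartic_of_cubic_point :: "'a::field_char_0 \<Rightarrow> 'a \<Rightarrow> 'a \<Rightarrow> 'a \<Rightarrow> 'a \<times> 'a \<Rightarrow> 'a \<times> 'a" where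
  "quartic_of_cubic_point a c T F = (\<lambda>(X, Y).
     let s = Y / (F * T * (X - 2*a*c*T^2)) in (s, F * s^2 + (4*a*c * (F^2 - 1) - 2*X / T^2) / F))"

lemma solution_of_quartic_point:
  fixes a c F s r x z :: "'a::field_char_0"
  assumes "a \<noteq> 0" "c \<noteq> 0" "s \<noteq> 0" "on_quartic a c F (s, r)"
    and "solution_of_quartic_point a c F (s, r) = (x, z)"
  shows "x \<noteq> 0" "z \<noteq> 0" "(a * x + c / x) * F = a * z + c / z"
proof -
  have x: "x = 2*c / s" and z: "z = (F * (s^2 + 4*a*c) + r) / (4*a*s)"
    using assms(5) by (auto simp: solution_of_quartic_point_def)
  define u where "u = (s^2 + 4*a*c) / (2*s)"
  have fx: "a * x + c / x = u"
    unfolding x u_def using assms(2,3) by (simp add: field_simps power2_eq_square)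
  have "(2*a*z - F*u)^2 = (r / (2*s))^2"
    unfolding z u_def using assms(1,3) by (simp add: field_simps)
  also have "\<dots> = F^2 * u^2 - 4*a*c"
    using assms(3,4) unfolding u_def on_quartic_def
    by (simp add: power_divide field_simps power2_eq_square power4_eq_xxxx)
  finally have "4*a * (a*z^2 - F*u*z + c) = 0"
    by (simp add: power2_eq_square algebra_simps)
  hence "a*z^2 - F*u*z + c = 0" using assms(1) by simp
  hence quad: "a*z^2 + c = F*u*z" by (simp add: algebra_simps)
  show "x \<noteq> 0" unfolding x using assms(2,3) by simp
  show z0: "z \<noteq> 0" using quad assms(2) by auto
  have "a * z + c / z = (a*z^2 + c) / z" using z0 by (simp add: field_simps power2_eq_square)
  thus "(a * x + c / x) * F = a * z + c / z" using quad z0 fx by simp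
qed

lemma inj_on_solution_of_quartic_point:
  fixes a c F :: "'a::field_char_0"
  assumes "a \<noteq> 0" "c \<noteq> 0"
  shows "inj_on (solution_of_quartic_point a c F) {(s, r). s \<noteq> 0}"
proof (rule inj_onI, clarsimp)
  fix s r s' r' :: 'a
  assume "s \<noteq> 0" "s' \<noteq> 0" and eq: "solution_of_quartic_point a c F (s, r) = solution_of_quartic_point a c F (s', r')"
  hence "2*c/s = 2*c/s'" by (simp add: solution_of_quartic_point_def)
  hence ss: "s' = s" using assms(2) \<open>s \<noteq> 0\<close> \<open>s' \<noteq> 0\<close> by (simp add: field_simps)
  from eq have "(F * (s^2 + 4*a*c) + r) / (4*a*s) = (F * (s^2 + 4*a*c) + r') / (4*a*s)"
    by (simp add: solution_of_quartic_point_def ss)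
  hence "r' = r" using assms(1) \<open>s \<noteq> 0\<close> by (simp add: field_simps)
  with ss show "s = s' \<and> r = r'" by simp
qed

lemma quartic_of_cubic_point:
  fixes a c T F X Y :: "'a::field_char_0"
  defines "e \<equiv> 2*a*c*T^2"
  assumes "T \<noteq> 0" "F \<noteq> 0" "Y \<noteq> 0" and cubic: "Y^2 = (X - e) * (X + e) * (X - e * (2*F^2 - 1))"
  shows "fst (quartic_of_cubic_point a c T F (X, Y)) \<noteq> 0"
    and "on_quartic a c F (quartic_of_cubic_point a c T F (X, Y))"
proof -
  define s where "s = Y / (F * T * (X - e))"
  define t where "t = (4*a*c * (F^2 - 1) - 2*X / T^2) / F"
  have q: "quartic_of_cubic_point a c T F (X, Y) = (s, F * s^2 + t)"
    by (simp add: quartic_of_cubic_point_def s_def t_def e_def Let_def)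
  have Xe: "X \<noteq> e" using cubic assms(4) by auto
  show "fst (quartic_of_cubic_point a c T F (X, Y)) \<noteq> 0"
    using q Xe assms(2-4) by (simp add: s_def)
  have slope: "2*F*t - 8*a*c*(F^2 - 2) = -4 * (X - e) / T^2"
    unfolding t_def e_def using assms(2,3) by (simp add: field_simps)
  have "s^2 * (X - e) = Y^2 / (F^2 * T^2 * (X - e))"
    unfolding s_def using Xe by (simp add: power_divide power_mult_distrib power2_eq_square)
  also have "\<dots> = (X + e) * (X - e * (2*F^2 - 1)) / (F^2 * T^2)"
    unfolding cubic using Xe by (simp add: power2_eq_square)
  finally have s2: "s^2 * (X - e) = (X + e) * (X - e * (2*F^2 - 1)) / (F^2 * T^2)" .
  have "s^2 * (2*F*t - 8*a*c*(F^2 - 2)) = -4 / T^2 * (s^2 * (X - e))"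
    unfolding slope using assms(2) by (simp add: field_simps)
  also have "\<dots> = 16 * F^2 * (a*c)^2 - t^2"
    unfolding s2 unfolding t_def e_def using assms(2,3) by (simp add: field_simps power2_eq_square power4_eq_xxxx)
  finally show "on_quartic a c F (quartic_of_cubic_point a c T F (X, Y))"
    unfolding q on_quartic_def by (simp add: power2_eq_square power4_eq_xxxx algebra_simps)
qed

lemma inj_on_quartic_of_cubic_point:
  fixes a c T F :: "'a::field_char_0"
  assumes "T \<noteq> 0" "F \<noteq> 0"
  shows "inj_on (quartic_of_cubic_point a c T F) {(X, Y). X \<noteq> 2*a*c*T^2}"
proof (rule inj_onI, clarsimp)
  fix X Y X' Y' :: 'a
  assume X: "X \<noteq> 2*a*c*T^2" and X': "X' \<noteq> 2*a*c*T^2"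
    and eq: "quartic_of_cubic_point a c T F (X, Y) = quartic_of_cubic_point a c T F (X', Y')"
  define s where "s = Y / (F * T * (X - 2*a*c*T^2))"
  have ss: "Y' / (F * T * (X' - 2*a*c*T^2)) = s"
    using eq by (simp add: quartic_of_cubic_point_def s_def Let_def)
  with eq assms have XX: "X' = X"
    by (simp add: quartic_of_cubic_point_def s_def Let_def)
  have "Y = s * (F * T * (X - 2*a*c*T^2))" "Y' = s * (F * T * (X - 2*a*c*T^2))"
    using X X' ss assms unfolding s_def XX by simp_all
  with XX show "X = X' \<and> Y = Y'" by simp
qed

lemma infinite_solution_pairs_of_cubic:
  fixes a c T F :: "'a::field_char_0"
  defines "e \<equiv> 2*a*c*T^2"
  assumes "a \<noteq> 0" "c \<noteq> 0" "T \<noteq> 0" "F \<noteq> 0"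
    and "infinite {(X, Y). Y \<noteq> 0 \<and> Y^2 = (X - e) * (X + e) * (X - e * (2*F^2 - 1))}"
  shows "infinite {(x, z). x \<noteq> 0 \<and> z \<noteq> 0 \<and> (a * x + c / x) * F = a * z + c / z}"
proof -
  let ?G = "{(X, Y). Y \<noteq> 0 \<and> Y^2 = (X - e) * (X + e) * (X - e * (2*F^2 - 1))}"
  let ?\<Phi> = "solution_of_quartic_point a c F \<circ> quartic_of_cubic_point a c T F"
  have quartic: "fst (quartic_of_cubic_point a c T F p) \<noteq> 0 \<and>
      on_quartic a c F (quartic_of_cubic_point a c T F p)" if "p \<in> ?G" for p
    using that quartic_of_cubic_point[OF assms(4,5)] by (auto simp: e_def)
  have "?G \<subseteq> {(X, Y). X \<noteq> 2*a*c*T^2}" by (auto simp: e_def)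
  with inj_on_quartic_of_cubic_point[OF assms(4,5)]
  have "inj_on (quartic_of_cubic_point a c T F) ?G" by (rule inj_on_subset)
  moreover have "quartic_of_cubic_point a c T F ` ?G \<subseteq> {(s, r). s \<noteq> 0}"
  proof (rule image_subsetI)
    fix p assume "p \<in> ?G"
    with quartic show "quartic_of_cubic_point a c T F p \<in> {(s, r). s \<noteq> 0}"
      by (simp add: case_prod_beta)
  qed
  with inj_on_solution_of_quartic_point[OF assms(2,3)]
  have "inj_on (solution_of_quartic_point a c F) (quartic_of_cubic_point a c T F ` ?G)"
    by (rule inj_on_subset)
  ultimately have "inj_on ?\<Phi> ?G" by (rule comp_inj_on)
  hence "infinite (?\<Phi> ` ?G)" using assms(6) finite_imageD by blast
  moreover have "?\<Phi> ` ?G \<subseteq> {(x, z). x \<noteq> 0 \<and> z \<noteq> 0 \<and> (a * x + c / x) * F = a * z + c / z}"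
  proof (rule image_subsetI)
    fix p assume "p \<in> ?G"
    obtain s r where sr: "quartic_of_cubic_point a c T F p = (s, r)" by fastforce
    obtain x z where xz: "solution_of_quartic_point a c F (s, r) = (x, z)" by fastforce
    from quartic[OF \<open>p \<in> ?G\<close>] sr have "s \<noteq> 0" "on_quartic a c F (s, r)" by simp_all
    with xz solution_of_quartic_point[OF assms(2,3)]
    have "x \<noteq> 0 \<and> z \<noteq> 0 \<and> (a * x + c / x) * F = a * z + c / z" by blast
    with sr xz show "?\<Phi> p \<in> {(x, z). x \<noteq> 0 \<and> z \<noteq> 0 \<and> (a * x + c / x) * F = a * z + c / z}"
      by simp
  qed
  ultimately show ?thesis using finite_subset by blast
qed

section \<open>Discarding the trivial solutions\<close>

lemma finite_fibre_linear_plus_reciprocal: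
  fixes a c k :: "'a::field"
  assumes "a \<noteq> 0"
  shows "finite {x. x \<noteq> 0 \<and> a * x + c / x = k}"
proof -
  have "{x. x \<noteq> 0 \<and> a * x + c / x = k} \<subseteq> {x. poly [:c, -k, a:] x = 0}"
    by (auto simp: field_simps power2_eq_square)
  moreover have "[:c, -k, a:] \<noteq> 0" using assms by simp
  ultimately show ?thesis using poly_roots_finite finite_subset by blast
qed

text \<open>Only finitely many pairs fail to be nontrivial: z = t forces f x = 1, f z = 0 forces f x = 0,
  and x = z is impossible when f t \<noteq> 1.\<close>
lemma infinite_nontrivial_solutions:
  fixes f :: "'a::field \<Rightarrow> 'a"
  assumes fibres: "\<And>k. finite {x. x \<noteq> 0 \<and> f x = k}"
    and "t \<noteq> 0" "f t \<noteq> 0" "f t \<noteq> 1"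
    and pairs: "infinite {(x, z). x \<noteq> 0 \<and> z \<noteq> 0 \<and> f x * f t = f z}"
  shows "infinite {(x, y, z). x \<noteq> 0 \<and> y \<noteq> 0 \<and> z \<noteq> 0 \<and> f x * f y = f z \<and>
           x \<noteq> z \<and> y \<noteq> z \<and> f z \<noteq> 0}"
proof -
  define S where "S = {(x, y, z). x \<noteq> 0 \<and> y \<noteq> 0 \<and> z \<noteq> 0 \<and> f x * f y = f z \<and>
           x \<noteq> z \<and> y \<noteq> z \<and> f z \<noteq> 0}"
  let ?R = "\<lambda>k. {x. x \<noteq> 0 \<and> f x = k}"
  have "(x, z) \<in> (?R 1 \<times> {t}) \<union> (?R 0 \<times> ?R 0) \<union> (\<lambda>(x, y, z). (x, z)) ` S"
    if "x \<noteq> 0" "z \<noteq> 0" and eq: "f x * f t = f z" for x z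
  proof -
    consider "z = t" | "f z = 0" | "z \<noteq> t" "f z \<noteq> 0" by blast
    then show ?thesis
    proof cases
      case 1
      with eq assms(3) have "f x = 1" by simp
      with 1 \<open>x \<noteq> 0\<close> show ?thesis by simp
    next
      case 2
      with eq assms(3) have "f x = 0" by simp
      with 2 \<open>x \<noteq> 0\<close> \<open>z \<noteq> 0\<close> show ?thesis by simp
    next
      case 3
      have "x \<noteq> z"
      proof
        assume "x = z"
        with eq have "f z * (f t - 1) = 0" by (simp add: algebra_simps)
        with 3 assms(4) show False by simp
      qed
      with 3 eq \<open>x \<noteq> 0\<close> \<open>z \<noteq> 0\<close> assms(2) have "(x, t, z) \<in> S" by (auto simp: S_def)
      then show ?thesis by force
    qed
  qed
  hence "{(x, z). x \<noteq> 0 \<and> z \<noteq> 0 \<and> f x * f t = f z}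
          \<subseteq> (?R 1 \<times> {t}) \<union> (?R 0 \<times> ?R 0) \<union> (\<lambda>(x, y, z). (x, z)) ` S" by blast
  moreover have "finite ((?R 1 \<times> {t}) \<union> (?R 0 \<times> ?R 0))" using fibres by simp
  ultimately have "infinite ((\<lambda>(x, y, z). (x, z)) ` S)"
    using pairs finite_subset by (metis (no_types, lifting) finite_UnI)
  thus ?thesis unfolding S_def by blast
qed

theorem theorem1p2:
  fixes A C :: int and T :: rat
  defines "f \<equiv> (\<lambda>x::rat. of_int A * x + of_int C / x)"
  defines "e1 \<equiv> 2 * of_int A * of_int C * T^2"
  defines "e2 \<equiv> - 2 * of_int A * of_int C * T^2"
  defines "e3 \<equiv> 2 * of_int A * of_int C *
             (2 * (of_int A)^2 * T^4 + (4 * of_int A * of_int C - 1) * T^2 + 2 * (of_int C)^2)"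
  assumes "A * C \<noteq> 0"
    and "T \<noteq> 0"
    and "e1 \<noteq> e2" and "e1 \<noteq> e3" and "e2 \<noteq> e3"
    and "roots_curve_positive_rank e1 e2 e3"
  shows "infinite {(x::rat, y::rat, z::rat).
           x \<noteq> 0 \<and> y \<noteq> 0 \<and> z \<noteq> 0 \<and> f x * f y = f z \<and>
           x \<noteq> z \<and> y \<noteq> z \<and> f z \<noteq> 0}"
proof -
  define a c :: rat where "a = of_int A" and "c = of_int C"
  define F e where "F = f T" and "e = 2 * a * c * T^2"
  have a0: "a \<noteq> 0" and c0: "c \<noteq> 0" using assms(5) by (simp_all add: a_def c_def)
  have f: "f x = a * x + c / x" for x by (simp add: f_def a_def c_def)
  have e1: "e1 = e" and e2: "e2 = - e" and e3: "e3 = e * (2 * F^2 - 1)"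
    using assms(6) by (simp_all add: e1_def e2_def e3_def e_def F_def f a_def c_def
                                      field_simps power2_eq_square power4_eq_xxxx)
  have F0: "F \<noteq> 0" using assms(9) by (auto simp: e2 e3)
  have F1: "F \<noteq> 1" using assms(8) by (auto simp: e1 e3)
  have "infinite {(X, Y). Y \<noteq> 0 \<and> Y^2 = (X - e) * (X + e) * (X - e * (2 * F^2 - 1))}"
    using roots_curve_infinite_points[OF assms(7-10)] by (simp add: e1 e2 e3)
  hence "infinite {(x, z). x \<noteq> 0 \<and> z \<noteq> 0 \<and> (a * x + c / x) * F = a * z + c / z}"
    using infinite_solution_pairs_of_cubic[OF a0 c0 assms(6) F0] by (simp add: e_def)
  hence "infinite {(x, z). x \<noteq> 0 \<and> z \<noteq> 0 \<and> f x * F = f z}"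
    by (simp add: f)
  with finite_fibre_linear_plus_reciprocal[OF a0] show ?thesis unfolding F_def
    by (intro infinite_nontrivial_solutions) (use assms(6) F0 F1 in \<open>simp_all add: f F_def\<close>)
qed

end
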